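(* Let $\Gamma$ be a connected finite graph, let $\mathcal U$ be a nonempty proper subset of its vertex set $\mathcal V$, and let $\sigma_{\mathcal U}\equiv+1$ on $\mathcal U$. Then for every $t\in(0,1)$, all zeros $z$ of the conditional partition function $Z_{\Gamma|\sigma_{\mathcal U}}(\cdot,t)$ lie outside the closed unit disc, i.e. satisfy $|z|>1$.
   Context: Ferromagnetic Ising model on a finite graph $\Gamma=(\mathcal V,\mathcal E)$: a configuration is $\sigma:\mathcal V\to\{\pm1\}$, $I(\sigma)=\sum_{\{v,w\}\in\mathcal E}\sigma(v)\sigma(w)$, $M(\sigma)=\sum_{\{v,w\}\in\mathcal E}\tfrac12(\sigma(v)+\sigma(w))$, and the Gibbs weight is $W(\sigma)=t^{-I(\sigma)/2}z^{-M(\sigma)}$, where $z$ is the field-like variable and $t=e^{-2J/T}\in(0,1)$ is the temperature-like variable ($J>0$). For a partial configuration $\sigma_{\mathcal U}:\mathcal U\to\{\pm1\}$, the conditional partition function is $Z_{\Gamma|\sigma_{\mathcal U}}=\sum W(\sigma)$ over all $\sigma$ agreeing with $\sigma_{\mathcal U}$ on $\mathcal U$; it is a Laurent polynomial in $z$. *)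

theory Defs
  imports Complex_Main "HOL-Library.FuncSet"
begin

definition finite_graph :: "'a set \<Rightarrow> 'a set set \<Rightarrow> bool" where
  "finite_graph V E \<longleftrightarrow> finite V \<and> (\<forall>e\<in>E. e \<subseteq> V \<and> card e = 2)"

definition graph_connected :: "'a set \<Rightarrow> 'a set set \<Rightarrow> bool" where
  "graph_connected V E \<longleftrightarrow>
     (\<forall>v\<in>V. \<forall>w\<in>V. (v, w) \<in> {(x, y). {x, y} \<in> E}\<^sup>*)"

definition configs :: "'a set \<Rightarrow> ('a \<Rightarrow> int) set" where
  "configs V = PiE V (\<lambda>_. {-1, 1})"

definition ising_I :: "'a set set \<Rightarrow> ('a \<Rightarrow> int) \<Rightarrow> int" where
  "ising_I E \<sigma> = (\<Sum>e\<in>E. \<Prod>v\<in>e. \<sigma> v)"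

text \<open>Magnetisation M(sigma) = sum over edges {v,w} of (sigma(v)+sigma(w))/2
  (each summand is an integer in {-1,0,1}).\<close>
definition ising_M :: "'a set set \<Rightarrow> ('a \<Rightarrow> int) \<Rightarrow> int" where
  "ising_M E \<sigma> = (\<Sum>e\<in>E. (\<Sum>v\<in>e. \<sigma> v) div 2)"

definition ising_W :: "'a set set \<Rightarrow> real \<Rightarrow> complex \<Rightarrow> ('a \<Rightarrow> int) \<Rightarrow> complex" where
  "ising_W E t z \<sigma> =
     complex_of_real (t powr (- real_of_int (ising_I E \<sigma>) / 2)) * z powi (- ising_M E \<sigma>)"

definition cond_Z ::
  "'a set \<Rightarrow> 'a set set \<Rightarrow> 'a set \<Rightarrow> ('a \<Rightarrow> int) \<Rightarrow> complex \<Rightarrow> real \<Rightarrow> complex" where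
  "cond_Z V E U \<sigma>U z t =
     (\<Sum>\<sigma>\<in>{\<sigma>\<in>configs V. \<forall>u\<in>U. \<sigma> u = \<sigma>U u}. ising_W E t z \<sigma>)"

end

theory Submission
  imports Defs
begin

text \<open>Let \<open>S \<subseteq> V - U\<close> be the set of spins \<open>-1\<close>. Every edge contributes \<open>t powr (-1/2) / z\<close>,
  times \<open>t\<close> if it is cut by \<open>S\<close> and times \<open>z\<close> for each endpoint in \<open>S\<close>. Hence \<open>Z\<close> is a nonzero
  multiple of a multi-affine polynomial in the activities \<open>x v = z ^ deg v\<close>, and it suffices
  that this polynomial has no zeros on a polydisc whose radii all exceed \<open>1\<close>.
  This is proved by adding the free vertices one at a time, each adjacent to the part already
  built (connectedness), together with their edges into it. A new vertex alone gives the factor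
  \<open>1 + x y\<close>, zero-free only for \<open>|x y| < 1\<close>. An edge to \<open>U\<close> rescales \<open>x y\<close> by \<open>t < 1\<close>, and an
  edge inside is attached by Asano's contraction against the edge factor
  \<open>1 + t p + t q + p q\<close>; either way the radius at \<open>y\<close> grows beyond \<open>1\<close>.\<close>

section \<open>Asano contraction\<close>

definition bilinear_zero_free ::
  "real \<Rightarrow> real \<Rightarrow> complex \<Rightarrow> complex \<Rightarrow> complex \<Rightarrow> complex \<Rightarrow> bool" where
  "bilinear_zero_free r s A B C D \<longleftrightarrow>
     (\<forall>p q. cmod p < r \<longrightarrow> cmod q < s \<longrightarrow> A + B*p + C*q + D*p*q \<noteq> 0)"

lemma bilinear_zero_free_swap:
  assumes "bilinear_zero_free r s A B C D"
  shows "bilinear_zero_free s r A C B D"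
  unfolding bilinear_zero_free_def
proof (intro allI impI)
  fix p q :: complex assume "cmod p < s" "cmod q < r"
  hence "A + B*q + C*p + D*q*p \<noteq> 0" using assms unfolding bilinear_zero_free_def by blast
  thus "A + C*p + B*q + D*p*q \<noteq> 0" by (simp add: algebra_simps)
qed

lemma cmod_parallelogram:
  "(cmod (a + b))\<^sup>2 + (cmod (a - b))\<^sup>2 = 2 * (cmod a)\<^sup>2 + 2 * (cmod (b::complex))\<^sup>2"
  unfolding cmod_power2 by (simp add: power2_eq_square algebra_simps)

lemma bilinear_zero_free_norm_le:
  assumes H: "bilinear_zero_free 1 1 A B C D" and x: "cmod x < 1"
  shows "cmod (C + D*x) \<le> cmod (A + B*x)"
proof (rule ccontr)
  assume "\<not> ?thesis"
  hence lt: "cmod (A + B*x) < cmod (C + D*x)" by simp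
  hence nz: "C + D*x \<noteq> 0" by auto
  define y where "y = - ((A + B*x) / (C + D*x))"
  have "cmod y < 1" using lt nz by (simp add: y_def norm_divide divide_less_eq)
  moreover have "A + B*x + C*y + D*x*y = 0" using nz by (simp add: y_def field_simps)
  ultimately show False using H x unfolding bilinear_zero_free_def by blast
qed

text \<open>Averaging the bounds of \<open>bilinear_zero_free_norm_le\<close> at \<open>\<pm>\<rho>\<close>, in both variables,
  with the parallelogram law eliminates \<open>B\<close> and \<open>C\<close>.\<close>
lemma bilinear_zero_free_diag_bound:
  assumes H: "bilinear_zero_free 1 1 A B C D" and \<rho>: "0 \<le> \<rho>" "\<rho> < 1"
  shows "\<rho>\<^sup>2 * (cmod D)\<^sup>2 \<le> (cmod A)\<^sup>2"
proof -
  have H': "bilinear_zero_free 1 1 A C B D" using H by (rule bilinear_zero_free_swap)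
  let ?r = "complex_of_real \<rho>"
  have r: "cmod ?r < 1" "cmod (-?r) < 1" using \<rho> by auto
  have sq: "(cmod (Q + D*?r))\<^sup>2 \<le> (cmod (A + P*?r))\<^sup>2"
      "(cmod (Q - D*?r))\<^sup>2 \<le> (cmod (A - P*?r))\<^sup>2"
    if "bilinear_zero_free 1 1 A P Q D" for P Q
    using bilinear_zero_free_norm_le[OF that r(1)] bilinear_zero_free_norm_le[OF that r(2)]
    by (simp_all add: power_mono)
  have par: "(cmod (P + Q*?r))\<^sup>2 + (cmod (P - Q*?r))\<^sup>2 = 2*(cmod P)\<^sup>2 + 2*\<rho>\<^sup>2*(cmod Q)\<^sup>2" for P Q
    using cmod_parallelogram[of P "Q*?r"] \<rho> by (simp add: norm_mult power_mult_distrib)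
  have "\<rho>\<^sup>2 * ((cmod B)\<^sup>2 + (cmod C)\<^sup>2) \<le> (cmod B)\<^sup>2 + (cmod C)\<^sup>2"
    using \<rho> by (simp add: power_le_one mult_left_le_one_le)
  hence "\<rho>\<^sup>2 * (cmod B)\<^sup>2 + \<rho>\<^sup>2 * (cmod C)\<^sup>2 \<le> (cmod B)\<^sup>2 + (cmod C)\<^sup>2"
    by (simp add: distrib_left)
  then show ?thesis
    using sq[OF H] sq[OF H'] par[of A B] par[of C D] par[of B D] par[of A C] by linarith
qed

lemma asano_contraction_unit:
  assumes H: "bilinear_zero_free 1 1 A B C D" and z: "cmod z < 1"
  shows "A + D*z \<noteq> 0"
proof (cases "D = 0")
  case True
  moreover have "A \<noteq> 0"
    using spec[OF spec[OF H[unfolded bilinear_zero_free_def], of 0], of 0] by simp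
  ultimately show ?thesis by simp
next
  case False
  define \<rho> where "\<rho> = (cmod z + 1) / 2"
  have \<rho>: "0 \<le> \<rho>" "\<rho> < 1" "cmod z < \<rho>" using z by (auto simp: \<rho>_def)
  have "(\<rho> * cmod D)\<^sup>2 \<le> (cmod A)\<^sup>2"
    using bilinear_zero_free_diag_bound[OF H \<rho>(1,2)] by (simp add: power_mult_distrib)
  hence "\<rho> * cmod D \<le> cmod A" by (rule power2_le_imp_le) simp
  moreover have "cmod (D*z) < \<rho> * cmod D" using \<rho> False by (simp add: norm_mult)
  ultimately have "cmod (D*z) < cmod A" by simp
  then show ?thesis by (metis add.commute add_eq_0_iff norm_minus_cancel order_less_irrefl)
qed

lemma asano_contraction:
  assumes H: "bilinear_zero_free r s A B C D" and r: "0 < r" and s: "0 < s"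
    and z: "cmod z < r * s"
  shows "A + D*z \<noteq> 0"
proof -
  have "bilinear_zero_free 1 1 A (B*r) (C*s) (D*r*s)"
    unfolding bilinear_zero_free_def
  proof (intro allI impI)
    fix x y :: complex assume "cmod x < 1" "cmod y < 1"
    hence "cmod (x*r) < r" "cmod (y*s) < s" using r s by (simp_all add: norm_mult)
    hence "A + B*(x*r) + C*(y*s) + D*(x*r)*(y*s) \<noteq> 0" using H unfolding bilinear_zero_free_def by blast
    thus "A + B*r*x + C*s*y + D*r*s*x*y \<noteq> 0" by (simp add: algebra_simps)
  qed
  moreover have "cmod (z/(r*s)) < 1" using z r s by (simp add: norm_divide norm_mult divide_less_eq)
  ultimately have "A + (D*r*s) * (z/(r*s)) \<noteq> 0" by (rule asano_contraction_unit)
  thus ?thesis using r s by simp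
qed

text \<open>The bound \<open>l |a + y| \<le> |1 + a y|\<close>, squared and written in \<open>c = Re y\<close>, \<open>\<rho> = |y|\<close>.\<close>
lemma edge_factor_bound_real:
  fixes a l m \<rho> c :: real
  assumes a: "0 < a" "a < 1" and m: "1 < m" "a*m < 1" and l: "l*(m-a) = 1 - a*m"
    and \<rho>: "0 \<le> \<rho>" "\<rho> < m" and c: "-\<rho> \<le> c"
  shows "l\<^sup>2 * (a\<^sup>2 + 2*a*c + \<rho>\<^sup>2) \<le> 1 + 2*a*c + a\<^sup>2*\<rho>\<^sup>2"
proof -
  have ma: "0 < m - a" using a m by simp
  have "0 < l*(m-a)" using l m by simp
  hence l0: "0 < l" using ma by (simp add: zero_less_mult_iff)
  have "(m-a) - (1 - a*m) = (m-1)*(1+a)" by (simp add: algebra_simps)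
  moreover have "(m-1)*(1+a) \<ge> 0" using a m by simp
  ultimately have "l*(m-a) \<le> 1*(m-a)" using l by simp
  hence l1: "l \<le> 1" using ma by simp
  have "a*\<rho> \<le> a*m" using \<rho> a by (simp add: mult_left_mono)
  hence a\<rho>: "a*\<rho> < 1" using m by simp
  have c1: "l * \<bar>\<rho> - a\<bar> \<le> 1 - a*\<rho>"
  proof (cases "a \<le> \<rho>")
    case True
    have "(1 - a*\<rho>)*(m-a) - (1-a*m)*(\<rho>-a) = (m - \<rho>)*(1-a\<^sup>2)"
      by (simp add: algebra_simps power2_eq_square)
    moreover have "(m - \<rho>)*(1-a\<^sup>2) \<ge> 0" using \<rho> a by (simp add: power_le_one)
    ultimately have le: "(1-a*m)*(\<rho>-a) \<le> (1 - a*\<rho>)*(m-a)" by linarith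
    have "(l*(\<rho>-a))*(m-a) = (l*(m-a))*(\<rho>-a)" by (simp add: algebra_simps)
    also have "\<dots> \<le> (1 - a*\<rho>)*(m-a)" using l le by simp
    finally have "(l*(\<rho>-a))*(m-a) \<le> (1 - a*\<rho>)*(m-a)" .
    hence "l*(\<rho>-a) \<le> 1 - a*\<rho>" using ma by (simp add: mult_le_cancel_right)
    thus ?thesis using True by simp
  next
    case False
    have "l*(a - \<rho>) \<le> a - \<rho>" using l1 False by (simp add: mult_left_le_one_le)
    moreover have "(1 - a*\<rho>) - (a - \<rho>) = (1-a)*(1+\<rho>)" by (simp add: algebra_simps)
    moreover have "(1-a)*(1+\<rho>) \<ge> 0" using a \<rho> by simp
    ultimately have "l*(a - \<rho>) \<le> 1 - a*\<rho>" by linarith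
    thus ?thesis using False by simp
  qed
  have "\<bar>l*(\<rho> - a)\<bar> \<le> \<bar>1 - a*\<rho>\<bar>" using c1 a\<rho> l0 by (simp add: abs_mult)
  hence c2: "(l*(\<rho> - a))\<^sup>2 \<le> (1 - a*\<rho>)\<^sup>2" by (simp only: abs_le_square_iff)
  have c3: "0 \<le> 2*a*(1 - l\<^sup>2)*(c + \<rho>)"
    using a c l1 l0 by (simp add: power_le_one)
  have "1 + 2*a*c + a\<^sup>2*\<rho>\<^sup>2 - l\<^sup>2*(a\<^sup>2 + 2*a*c + \<rho>\<^sup>2)
      = ((1 - a*\<rho>)\<^sup>2 - (l*(\<rho>-a))\<^sup>2) + 2*a*(1 - l\<^sup>2)*(c + \<rho>)"
    by (simp add: algebra_simps power2_eq_square)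
  thus ?thesis using c2 c3 by linarith
qed

text \<open>The radii \<open>l\<close> and \<open>m\<close> are matched so that the Moebius map \<open>y \<mapsto> -(1 + a y)/(a + y)\<close>
  sends the disc \<open>|y| < m\<close> to the complement of the disc \<open>|y| < l\<close>.\<close>
lemma edge_factor_zero_free:
  fixes a l m :: real
  assumes a: "0 < a" "a < 1" and m: "1 < m" "a*m < 1" and l: "l*(m-a) = 1 - a*m"
  shows "bilinear_zero_free l m 1 a a 1"
  unfolding bilinear_zero_free_def
proof (intro allI impI notI)
  fix y1 y2 :: complex
  assume y1: "cmod y1 < l" and y2: "cmod y2 < m" and g: "1 + a*y1 + a*y2 + 1*y1*y2 = 0"
  have "(cmod (a + y2))\<^sup>2 = a\<^sup>2 + 2*a*Re y2 + (cmod y2)\<^sup>2"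
    "(cmod (1 + a*y2))\<^sup>2 = 1 + 2*a*Re y2 + a\<^sup>2*(cmod y2)\<^sup>2"
    unfolding cmod_power2 by (simp_all add: power2_eq_square algebra_simps)
  moreover have "- cmod y2 \<le> Re y2" using abs_Re_le_cmod[of y2] by linarith
  ultimately have "(l * cmod (a + y2))\<^sup>2 \<le> (cmod (1 + a*y2))\<^sup>2"
    using edge_factor_bound_real[OF a m l _ y2] by (simp add: power_mult_distrib)
  hence bound: "l * cmod (a + y2) \<le> cmod (1 + a*y2)"
    by (rule power2_le_imp_le[OF _ norm_ge_zero])
  have "y1 * (a + y2) = - (1 + a*y2)" using g by (simp add: algebra_simps add_eq_0_iff)
  hence eq: "cmod y1 * cmod (a + y2) = cmod (1 + a*y2)" by (metis norm_minus_cancel norm_mult)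
  show False
  proof (cases "a + y2 = 0")
    case True
    hence "1 + a*y2 = complex_of_real (1 - a\<^sup>2)" by (simp add: add_eq_0_iff power2_eq_square)
    moreover have "a\<^sup>2 < 1" using a power_strict_mono[of a 1 2] by simp
    hence "1 - a\<^sup>2 \<noteq> 0" by simp
    ultimately have "cmod (1 + a*y2) \<noteq> 0" by (metis norm_eq_zero of_real_eq_0_iff)
    thus False using eq True by simp
  next
    case False
    hence "cmod y1 * cmod (a + y2) < l * cmod (a + y2)" using y1 by simp
    thus False using eq bound by simp
  qed
qed

text \<open>\<open>m\<close> is taken below \<open>(r + a)/(1 + a r)\<close>, the value at which \<open>r l = 1\<close>.\<close>
lemma edge_factor_radii:
  fixes a r s :: real
  assumes a: "0 < a" "a < 1" and r: "1 < r" and s: "1 \<le> s"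
  obtains l m where "1 < m" "a*m < 1" "l*(m-a) = 1 - a*m" "1 < r*l" "1 < s*m"
proof -
  define M where "M = (r + a)/(1 + a*r)"
  have ar0: "0 < 1 + a*r" using a r by (simp add: add_pos_pos)
  have "(r + a) - (1 + a*r) = (r-1)*(1-a)" by (simp add: algebra_simps)
  moreover have "(r-1)*(1-a) > 0" using a r by simp
  ultimately have "1 + a*r < r + a" by linarith
  hence M1: "1 < M" using ar0 by (simp add: M_def less_divide_eq_1_pos)
  have "a*a < 1*1" using a by (intro mult_strict_mono) auto
  hence "a*(r+a) < 1 + a*r" by (simp add: algebra_simps)
  hence aM: "a*M < 1" using ar0 by (simp add: M_def divide_less_eq)
  define m where "m = (1 + M)/2"
  have m: "1 < m" "m < M" using M1 by (auto simp: m_def)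
  have "a*m < a*M" using m a by simp
  hence am: "a*m < 1" using aM by simp
  have ma: "0 < m - a" using m a by simp
  define l where "l = (1 - a*m)/(m-a)"
  have l: "l*(m-a) = 1 - a*m" using ma by (simp add: l_def)
  have "m*(1 + a*r) < M*(1 + a*r)" using m ar0 by simp
  also have "\<dots> = r + a" using ar0 by (simp add: M_def)
  finally have "m - a < r*(1 - a*m)" by (simp add: algebra_simps)
  hence rl: "1 < r*l" using ma by (simp add: l_def pos_less_divide_eq)
  have "1*m \<le> s*m" using s m by (intro mult_right_mono) auto
  hence "1 < s*m" using m by linarith
  with m(1) am l rl show ?thesis by (rule that)
qed

text \<open>Multiply by the edge factor \<open>1 + a y\<^sub>1 + a y\<^sub>2 + y\<^sub>1 y\<^sub>2\<close> in fresh variables and contract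
  \<open>x\<^sub>i\<close> with \<open>y\<^sub>i\<close> by Asano's contraction, one pair at a time.\<close>
lemma bilinear_zero_free_attach_edge:
  fixes a r s :: real
  assumes a: "0 < a" "a < 1" and r: "1 < r" and s: "1 \<le> s"
  obtains r' s' where "1 < r'" "1 < s'"
    "\<And>(\<alpha>::complex) (\<beta>::complex) (\<gamma>::complex) (\<delta>::complex).
       bilinear_zero_free r s \<alpha> \<beta> \<gamma> \<delta> \<Longrightarrow> bilinear_zero_free r' s' \<alpha> (a*\<beta>) (a*\<gamma>) \<delta>"
proof -
  obtain l m where m: "1 < m" "a*m < 1" and l: "l*(m-a) = 1 - a*m" and rl: "1 < r*l"
    and sm: "1 < s*m"
    using edge_factor_radii[OF a r s] by blast
  have "0 < r*l" using rl by simp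
  hence l0: "0 < l" using r by (simp add: zero_less_mult_iff)
  have g: "bilinear_zero_free l m 1 a a 1" by (rule edge_factor_zero_free[OF a m l])
  have "bilinear_zero_free (r*l) (s*m) \<alpha> (a*\<beta>) (a*\<gamma>) \<delta>"
    if f: "bilinear_zero_free r s \<alpha> \<beta> \<gamma> \<delta>" for \<alpha> \<beta> \<gamma> \<delta> :: complex
  proof -
    have contract_x1_y1: "bilinear_zero_free r l ((\<alpha> + \<gamma>*x2)*(1 + a*y2)) ((\<beta> + \<delta>*x2)*(1 + a*y2))
        ((\<alpha> + \<gamma>*x2)*(a + y2)) ((\<beta> + \<delta>*x2)*(a + y2))"
      if x2: "cmod x2 < s" and y2: "cmod y2 < m" for x2 y2 :: complex
      unfolding bilinear_zero_free_def
    proof (intro allI impI)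
      fix x1 y1 :: complex assume x1: "cmod x1 < r" and y1: "cmod y1 < l"
      have "\<alpha> + \<beta>*x1 + \<gamma>*x2 + \<delta>*x1*x2 \<noteq> 0" "1 + a*y1 + a*y2 + 1*y1*y2 \<noteq> 0"
        using f g x1 x2 y1 y2 unfolding bilinear_zero_free_def by blast+
      hence "(\<alpha> + \<beta>*x1 + \<gamma>*x2 + \<delta>*x1*x2) * (1 + a*y1 + a*y2 + y1*y2) \<noteq> 0" by simp
      thus "(\<alpha> + \<gamma>*x2)*(1 + a*y2) + (\<beta> + \<delta>*x2)*(1 + a*y2)*x1 + (\<alpha> + \<gamma>*x2)*(a + y2)*y1
          + (\<beta> + \<delta>*x2)*(a + y2)*x1*y1 \<noteq> 0"
        by (simp add: algebra_simps)
    qed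
    show ?thesis
      unfolding bilinear_zero_free_def
    proof (intro allI impI)
      fix p q :: complex assume p: "cmod p < r*l" and q: "cmod q < s*m"
      have "bilinear_zero_free s m (\<alpha> + a*\<beta>*p) (\<gamma> + a*\<delta>*p) (a*\<alpha> + \<beta>*p) (a*\<gamma> + \<delta>*p)"
        unfolding bilinear_zero_free_def
      proof (intro allI impI)
        fix x2 y2 :: complex assume "cmod x2 < s" "cmod y2 < m"
        hence "(\<alpha> + \<gamma>*x2)*(1 + a*y2) + (\<beta> + \<delta>*x2)*(a + y2)*p \<noteq> 0"
          using r l0 p by (intro asano_contraction[OF contract_x1_y1]) simp_all
        thus "\<alpha> + a*\<beta>*p + (\<gamma> + a*\<delta>*p)*x2 + (a*\<alpha> + \<beta>*p)*y2 + (a*\<gamma> + \<delta>*p)*x2*y2 \<noteq> 0"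
          by (simp add: algebra_simps)
      qed
      hence "\<alpha> + a*\<beta>*p + (a*\<gamma> + \<delta>*p)*q \<noteq> 0"
        using s m q by (intro asano_contraction) simp_all
      thus "\<alpha> + a*\<beta>*p + a*\<gamma>*q + \<delta>*p*q \<noteq> 0" by (simp add: algebra_simps)
    qed
  qed
  with rl sm show ?thesis by (rule that)
qed

section \<open>The cut polynomial\<close>

text \<open>The reduced partition function: \<open>S\<close> is the set of vertices of spin \<open>-1\<close>, each edge cut
  by \<open>S\<close> carries the factor \<open>t\<close>, and each vertex of \<open>S\<close> its own activity \<open>x v\<close>.\<close>
definition cut_weight :: "real \<Rightarrow> 'a set \<Rightarrow> 'a set \<Rightarrow> complex" where
  "cut_weight t e S = (if card (e \<inter> S) = 1 then complex_of_real t else 1)"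

definition cut_poly :: "real \<Rightarrow> 'a set \<Rightarrow> 'a set set \<Rightarrow> ('a \<Rightarrow> complex) \<Rightarrow> complex" where
  "cut_poly t X F x = (\<Sum>S\<in>Pow X. (\<Prod>e\<in>F. cut_weight t e S) * (\<Prod>v\<in>S. x v))"

lemma sum_Pow_remove:
  fixes f :: "'a set \<Rightarrow> 'b::comm_monoid_add"
  assumes "finite X" "v \<in> X"
  shows "(\<Sum>S\<in>Pow X. f S) = (\<Sum>S\<in>Pow (X - {v}). f S + f (insert v S))"
proof -
  have X: "X = insert v (X - {v})" using assms by auto
  have "(\<Sum>S\<in>Pow X. f S) = (\<Sum>S\<in>Pow (X - {v}) \<union> insert v ` Pow (X - {v}). f S)"
    by (subst X, subst Pow_insert) simp
  also have "\<dots> = (\<Sum>S\<in>Pow (X - {v}). f S) + (\<Sum>S\<in>insert v ` Pow (X - {v}). f S)"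
    by (rule sum.union_disjoint) (use assms in auto)
  also have "(\<Sum>S\<in>insert v ` Pow (X - {v}). f S) = (\<Sum>S\<in>Pow (X - {v}). f (insert v S))"
    by (rule sum.reindex_cong[where l = "insert v"]) (auto simp: inj_on_def)
  finally show ?thesis by (simp add: sum.distrib)
qed

lemma sum_Pow_remove2:
  fixes f :: "'a set \<Rightarrow> 'b::comm_monoid_add"
  assumes "finite X" "u \<in> X" "v \<in> X" "u \<noteq> v"
  shows "(\<Sum>S\<in>Pow X. f S) = (\<Sum>S\<in>Pow (X - {u, v}).
     f S + f (insert u S) + f (insert v S) + f (insert u (insert v S)))"
proof -
  have "(\<Sum>S\<in>Pow X. f S) = (\<Sum>S\<in>Pow (X - {u}). f S + f (insert u S))"
    by (rule sum_Pow_remove) fact+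
  also have "\<dots> = (\<Sum>S\<in>Pow (X - {u} - {v}). f S + f (insert v S))
      + (\<Sum>S\<in>Pow (X - {u} - {v}). f (insert u S) + f (insert u (insert v S)))"
    using assms by (simp add: sum_Pow_remove[of "X - {u}" v] sum.distrib)
  also have "\<dots> = (\<Sum>S\<in>Pow (X - {u} - {v}).
     f S + f (insert u S) + f (insert v S) + f (insert u (insert v S)))"
    by (simp only: sum.distrib[symmetric]) (simp add: add_ac)
  also have "X - {u} - {v} = X - {u, v}" by auto
  finally show ?thesis .
qed

lemma cut_poly_empty: "cut_poly t {} F x = 1"
  by (simp add: cut_poly_def cut_weight_def)

lemma cut_poly_insert_vertex:
  assumes "finite X" "v \<notin> X" "\<forall>e\<in>F. v \<notin> e"
  shows "cut_poly t (insert v X) F x = cut_poly t X F x * (1 + x v)"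
proof -
  have "cut_poly t (insert v X) F x = (\<Sum>S\<in>Pow X. (\<Prod>e\<in>F. cut_weight t e S) * (\<Prod>w\<in>S. x w)
          + (\<Prod>e\<in>F. cut_weight t e (insert v S)) * (\<Prod>w\<in>insert v S. x w))"
    unfolding cut_poly_def using sum_Pow_remove[of "insert v X" v] assms by simp
  also have "\<dots> = (\<Sum>S\<in>Pow X. ((\<Prod>e\<in>F. cut_weight t e S) * (\<Prod>w\<in>S. x w)) * (1 + x v))"
  proof (rule sum.cong)
    fix S assume S: "S \<in> Pow X"
    hence "v \<notin> S" "finite S" using assms finite_subset by auto
    moreover have "cut_weight t e (insert v S) = cut_weight t e S" if "e \<in> F" for e
      using that assms by (simp add: cut_weight_def)
    ultimately show "(\<Prod>e\<in>F. cut_weight t e S) * (\<Prod>w\<in>S. x w)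
        + (\<Prod>e\<in>F. cut_weight t e (insert v S)) * (\<Prod>w\<in>insert v S. x w)
        = ((\<Prod>e\<in>F. cut_weight t e S) * (\<Prod>w\<in>S. x w)) * (1 + x v)"
      by (simp add: algebra_simps)
  qed simp
  finally show ?thesis by (simp add: cut_poly_def sum_distrib_right)
qed

text \<open>An edge to a vertex outside \<open>X\<close> is cut exactly when its endpoint \<open>v\<close> in \<open>X\<close> is,
  so it only rescales the activity of \<open>v\<close>.\<close>
lemma cut_poly_insert_boundary_edge:
  assumes "finite X" "finite F" "e \<notin> F" "v \<in> X" "e = {v, b}" "b \<notin> X"
  shows "cut_poly t X (insert e F) x = cut_poly t X F (x(v := t * x v))"
  unfolding cut_poly_def
proof (rule sum.cong)
  fix S assume S: "S \<in> Pow X"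
  have fin: "finite S" using S assms finite_subset by auto
  have "e \<inter> S = (if v \<in> S then {v} else {})" using S assms by auto
  hence h: "cut_weight t e S = (if v \<in> S then complex_of_real t else 1)"
    by (cases "v \<in> S") (simp_all add: cut_weight_def)
  have "(\<Prod>w\<in>S. (x(v := t * x v)) w) = (\<Prod>w\<in>S. (if w = v then complex_of_real t else 1) * x w)"
    by (rule prod.cong) auto
  hence p: "(\<Prod>w\<in>S. (x(v := t * x v)) w) = (if v \<in> S then complex_of_real t else 1) * (\<Prod>w\<in>S. x w)"
    using fin by (simp add: prod.distrib prod.delta)
  show "(\<Prod>f\<in>insert e F. cut_weight t f S) * (\<Prod>w\<in>S. x w)
      = (\<Prod>f\<in>F. cut_weight t f S) * (\<Prod>w\<in>S. (x(v := t * x v)) w)"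
    unfolding prod.insert[OF assms(2,3)] p h by (simp add: mult_ac)
qed simp

lemma cut_poly_bilinear:
  fixes t :: real and F :: "'a set set" and x :: "'a \<Rightarrow> complex"
  assumes "finite X" "u \<in> X" "v \<in> X" "u \<noteq> v"
  defines "c T \<equiv> (\<Sum>S\<in>Pow (X - {u, v}). (\<Prod>e\<in>F. cut_weight t e (T \<union> S)) * (\<Prod>w\<in>S. x w))"
  shows "cut_poly t X F (x(u := p, v := q)) = c {} + c {u} * p + c {v} * q + c {u, v} * p * q"
proof -
  let ?H = "\<lambda>S. \<Prod>e\<in>F. cut_weight t e S" and ?P = "\<lambda>S. \<Prod>w\<in>S. x w"
  let ?y = "x(u := p, v := q)"
  have upd: "(\<Prod>w\<in>S. ?y w) = ?P S" if "S \<in> Pow (X - {u, v})" for S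
    using that by (intro prod.cong) auto
  have "cut_poly t X F ?y = (\<Sum>S\<in>Pow (X - {u, v}). ?H S * ?P S + ?H ({u} \<union> S) * p * ?P S
      + ?H ({v} \<union> S) * q * ?P S + ?H ({u, v} \<union> S) * p * q * ?P S)"
    unfolding cut_poly_def sum_Pow_remove2[OF assms(1-4)]
  proof (rule sum.cong)
    fix S assume S: "S \<in> Pow (X - {u, v})"
    moreover have "?y u = p" "?y v = q" using assms(4) by simp_all
    moreover have "finite S" "u \<notin> S" "v \<notin> S" using S assms(1) finite_subset by auto
    ultimately show "?H S * (\<Prod>w\<in>S. ?y w) + ?H (insert u S) * (\<Prod>w\<in>insert u S. ?y w)
        + ?H (insert v S) * (\<Prod>w\<in>insert v S. ?y w)
        + ?H (insert u (insert v S)) * (\<Prod>w\<in>insert u (insert v S). ?y w)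
      = ?H S * ?P S + ?H ({u} \<union> S) * p * ?P S + ?H ({v} \<union> S) * q * ?P S
        + ?H ({u, v} \<union> S) * p * q * ?P S"
      using upd[OF S] assms(4) by (simp add: algebra_simps del: fun_upd_apply)
  qed simp
  also have "\<dots> = c {} + c {u} * p + c {v} * q + c {u, v} * p * q"
    unfolding c_def sum_distrib_right sum.distrib by (simp only: mult_ac Un_empty_left)
  finally show ?thesis .
qed

lemma cut_poly_insert_internal_edge:
  assumes "finite X" "finite F" "e \<notin> F" "u \<in> X" "v \<in> X" "u \<noteq> v" "e = {u, v}"
  obtains \<alpha> \<beta> \<gamma> \<delta>
  where "\<And>p q. cut_poly t X F (x(u := p, v := q)) = \<alpha> + \<beta>*p + \<gamma>*q + \<delta>*p*q"
    and "cut_poly t X (insert e F) x = \<alpha> + t*\<beta>*x u + t*\<gamma>*x v + \<delta>*x u*x v"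
proof -
  define c where "c G T = (\<Sum>S\<in>Pow (X - {u, v}). (\<Prod>f\<in>G. cut_weight t f (T \<union> S)) * (\<Prod>w\<in>S. x w))"
    for G T
  have "c (insert e F) T = cut_weight t e T * c F T" if "T \<subseteq> {u, v}" for T
    unfolding c_def sum_distrib_left
  proof (rule sum.cong[OF refl])
    fix S assume "S \<in> Pow (X - {u, v})"
    hence "e \<inter> (T \<union> S) = e \<inter> T" using that assms(7) by auto
    then show "(\<Prod>f\<in>insert e F. cut_weight t f (T \<union> S)) * (\<Prod>w\<in>S. x w)
        = cut_weight t e T * ((\<Prod>f\<in>F. cut_weight t f (T \<union> S)) * (\<Prod>w\<in>S. x w))"
      using assms(2,3) by (simp add: cut_weight_def)
  qed
  moreover have "cut_weight t e {} = 1" "cut_weight t e {u} = t" "cut_weight t e {v} = t"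
    "cut_weight t e {u, v} = 1"
    using assms(6,7) by (simp_all add: cut_weight_def insert_commute)
  moreover have "cut_poly t X (insert e F) x = c (insert e F) {} + c (insert e F) {u} * x u
      + c (insert e F) {v} * x v + c (insert e F) {u, v} * x u * x v"
    using cut_poly_bilinear[OF assms(1,4-6), where F = "insert e F" and t = t and x = x
        and p = "x u" and q = "x v"]
    by (simp add: c_def)
  ultimately have "cut_poly t X (insert e F) x
      = c F {} + t * c F {u} * x u + t * c F {v} * x v + c F {u, v} * x u * x v"
    by (simp add: algebra_simps)
  moreover have "cut_poly t X F (x(u := p, v := q)) = c F {} + c F {u} * p + c F {v} * q + c F {u, v} * p * q"
    for p q
    unfolding c_def by (rule cut_poly_bilinear[OF assms(1,4-6)])
  ultimately show ?thesis using that by blast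
qed

section \<open>Zero-free polydiscs\<close>

definition zero_free_on :: "('a \<Rightarrow> real) \<Rightarrow> real \<Rightarrow> 'a set \<Rightarrow> 'a set set \<Rightarrow> bool" where
  "zero_free_on R t X F \<longleftrightarrow> (\<forall>x. (\<forall>w\<in>X. cmod (x w) < R w) \<longrightarrow> cut_poly t X F x \<noteq> 0)"

definition zero_free_near_unit_polydisc :: "real \<Rightarrow> 'a set \<Rightarrow> 'a set set \<Rightarrow> bool" where
  "zero_free_near_unit_polydisc t X F \<longleftrightarrow> (\<exists>R. (\<forall>w\<in>X. 1 < R w) \<and> zero_free_on R t X F)"

lemma zero_free_on_insert_vertex:
  assumes "finite X" "y \<notin> X" "\<forall>e\<in>F. y \<notin> e" "zero_free_on R t X F"
  shows "zero_free_on (R(y := 1)) t (insert y X) F"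
  unfolding zero_free_on_def
proof (intro allI impI)
  fix x assume x: "\<forall>w\<in>insert y X. cmod (x w) < (R(y := 1)) w"
  hence "\<forall>w\<in>X. cmod (x w) < R w" using assms(2) by (metis fun_upd_other insertI2)
  hence "cut_poly t X F x \<noteq> 0" using assms(4) unfolding zero_free_on_def by blast
  moreover have "1 + x y \<noteq> 0"
  proof
    assume "1 + x y = 0"
    hence "x y = -1" by (simp add: add_eq_0_iff)
    thus False using x by simp
  qed
  ultimately show "cut_poly t (insert y X) F x \<noteq> 0"
    by (simp add: cut_poly_insert_vertex[OF assms(1-3)])
qed

lemma zero_free_on_insert_boundary_edge:
  assumes t: "0 < t" and "finite X" "finite F" "e \<notin> F" "y \<in> X" "e = {y, b}" "b \<notin> X"
    and R: "zero_free_on R t X F"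
  shows "zero_free_on (R(y := R y / t)) t X (insert e F)"
  unfolding zero_free_on_def
proof (intro allI impI)
  fix x assume x: "\<forall>w\<in>X. cmod (x w) < (R(y := R y / t)) w"
  have "cmod ((x(y := t * x y)) w) < R w" if "w \<in> X" for w
  proof (cases "w = y")
    case True
    have "cmod (x y) < R y / t" using x \<open>y \<in> X\<close> by fastforce
    thus ?thesis using True t by (simp add: norm_mult less_divide_eq mult.commute)
  next
    case False
    thus ?thesis using x that by fastforce
  qed
  hence "cut_poly t X F (x(y := t * x y)) \<noteq> 0" using R unfolding zero_free_on_def by blast
  thus "cut_poly t X (insert e F) x \<noteq> 0"
    by (simp add: cut_poly_insert_boundary_edge[OF assms(2-7)])
qed

lemma zero_free_on_insert_internal_edge:
  assumes t: "0 < t" "t < 1" and "finite X" "finite F" "e \<notin> F" "u \<in> X" "y \<in> X" "u \<noteq> y"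
    and e: "e = {u, y}" and Ru: "1 < R u" and Ry: "1 \<le> R y" and R: "zero_free_on R t X F"
  obtains r' s' where "1 < r'" "1 < s'" "zero_free_on (R(u := r', y := s')) t X (insert e F)"
proof -
  obtain r' s' where r's': "1 < r'" "1 < s'" and attach:
    "\<And>(\<alpha>::complex) (\<beta>::complex) (\<gamma>::complex) (\<delta>::complex).
       bilinear_zero_free (R u) (R y) \<alpha> \<beta> \<gamma> \<delta> \<Longrightarrow> bilinear_zero_free r' s' \<alpha> (t*\<beta>) (t*\<gamma>) \<delta>"
    using bilinear_zero_free_attach_edge[OF t Ru Ry] by blast
  have "zero_free_on (R(u := r', y := s')) t X (insert e F)"
    unfolding zero_free_on_def
  proof (intro allI impI)
    fix x assume x: "\<forall>w\<in>X. cmod (x w) < (R(u := r', y := s')) w"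
    obtain \<alpha> \<beta> \<gamma> \<delta> :: complex where
      coeffs: "\<And>p q. cut_poly t X F (x(u := p, y := q)) = \<alpha> + \<beta>*p + \<gamma>*q + \<delta>*p*q" and
      edge: "cut_poly t X (insert e F) x = \<alpha> + t*\<beta>*x u + t*\<gamma>*x y + \<delta>*x u*x y"
      using cut_poly_insert_internal_edge[OF assms(3-8) e, where t = t and x = x] by blast
    have "bilinear_zero_free (R u) (R y) \<alpha> \<beta> \<gamma> \<delta>"
      unfolding bilinear_zero_free_def
    proof (intro allI impI)
      fix p q :: complex assume pq: "cmod p < R u" "cmod q < R y"
      have "cmod ((x(u := p, y := q)) w) < R w" if "w \<in> X" for w
        using x[rule_format, OF that] pq by (cases "w = u"; cases "w = y") auto
      hence "cut_poly t X F (x(u := p, y := q)) \<noteq> 0" using R unfolding zero_free_on_def by blast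
      thus "\<alpha> + \<beta>*p + \<gamma>*q + \<delta>*p*q \<noteq> 0" by (simp add: coeffs)
    qed
    hence "bilinear_zero_free r' s' \<alpha> (t*\<beta>) (t*\<gamma>) \<delta>" by (rule attach)
    moreover have "cmod (x u) < r'" "cmod (x y) < s'"
      using x[rule_format, OF \<open>u \<in> X\<close>] x[rule_format, OF \<open>y \<in> X\<close>] \<open>u \<noteq> y\<close> by simp_all
    ultimately show "cut_poly t X (insert e F) x \<noteq> 0"
      unfolding edge bilinear_zero_free_def by blast
  qed
  with r's' show ?thesis by (rule that)
qed

text \<open>Every edge at \<open>y\<close> pushes the radius at \<open>y\<close> strictly above \<open>1\<close>: a boundary edge
  divides it by \<open>t\<close>, an internal one comes from \<open>bilinear_zero_free_attach_edge\<close>.\<close>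
lemma zero_free_on_insert_edge:
  assumes t: "0 < t" "t < 1" and X: "finite X" and F: "finite F" "e \<notin> F" and y: "y \<in> X"
    and e: "e = {y, u}" "u \<noteq> y"
    and R1: "\<forall>w\<in>X - {y}. 1 < R w" and Ry: "1 \<le> R y" and R: "zero_free_on R t X F"
  obtains R' where "\<forall>w\<in>X. 1 < R' w" "zero_free_on R' t X (insert e F)"
proof (cases "u \<in> X")
  case False
  have "zero_free_on (R(y := R y / t)) t X (insert e F)"
    using zero_free_on_insert_boundary_edge[OF t(1) X F y e(1) False R] .
  moreover have "R y < R y / t" using Ry t by (simp add: less_divide_eq)
  ultimately show ?thesis using R1 Ry by (intro that[of "R(y := R y / t)"]) auto
next
  case True
  have Ru: "1 < R u" using R1 True e by auto
  obtain r' s' where "1 < r'" "1 < s'" "zero_free_on (R(u := r', y := s')) t X (insert e F)"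
    using zero_free_on_insert_internal_edge[OF t X F True y e(2) _ Ru Ry R] e by (auto simp: insert_commute)
  then show ?thesis using R1 by (intro that[of "R(u := r', y := s')"]) auto
qed

lemma zero_free_near_unit_polydisc_insert_edges:
  assumes t: "0 < t" "t < 1" and X: "finite X" and F: "finite F" and y: "y \<in> X"
    and G: "finite G" "G \<noteq> {}" "\<forall>e\<in>G. \<exists>u. e = {y, u} \<and> u \<noteq> y" "G \<inter> F = {}"
    and R1: "\<forall>w\<in>X - {y}. 1 < R w" and Ry: "1 \<le> R y" and R: "zero_free_on R t X F"
  shows "zero_free_near_unit_polydisc t X (F \<union> G)"
  using G
proof (induction G rule: finite_ne_induct)
  case (singleton e)
  then obtain u where "e = {y, u}" "u \<noteq> y" "e \<notin> F" by auto
  then obtain R' where "\<forall>w\<in>X. 1 < R' w" "zero_free_on R' t X (insert e F)"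
    using zero_free_on_insert_edge[OF t X F _ y _ _ R1 Ry R] by blast
  then show ?case unfolding zero_free_near_unit_polydisc_def by auto
next
  case (insert e G)
  then obtain R' where R': "\<forall>w\<in>X. 1 < R' w" "zero_free_on R' t X (F \<union> G)"
    unfolding zero_free_near_unit_polydisc_def by auto
  from insert obtain u where e: "e = {y, u}" "u \<noteq> y" and eFG: "e \<notin> F \<union> G" by auto
  have "finite (F \<union> G)" "\<forall>w\<in>X - {y}. 1 < R' w" "1 \<le> R' y"
    using F insert.hyps(1) R'(1) y by auto
  then obtain R'' where "\<forall>w\<in>X. 1 < R'' w" "zero_free_on R'' t X (insert e (F \<union> G))"
    using zero_free_on_insert_edge[OF t X _ eFG y e _ _ R'(2)] by blast
  then show ?case unfolding zero_free_near_unit_polydisc_def by auto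
qed

lemma zero_free_near_unit_polydisc_insert_vertex:
  assumes t: "0 < t" "t < 1" and X: "finite X" and F: "finite F" and y: "y \<notin> X"
    and Fy: "\<forall>e\<in>F. y \<notin> e" and zf: "zero_free_near_unit_polydisc t X F"
    and G: "finite G" "G \<noteq> {}" "\<forall>e\<in>G. \<exists>u. e = {y, u} \<and> u \<noteq> y"
  shows "zero_free_near_unit_polydisc t (insert y X) (F \<union> G)"
proof -
  obtain R where R1: "\<forall>w\<in>X. 1 < R w" and R: "zero_free_on R t X F"
    using zf unfolding zero_free_near_unit_polydisc_def by blast
  have "zero_free_on (R(y := 1)) t (insert y X) F"
    by (rule zero_free_on_insert_vertex[OF X y Fy R])
  moreover have "G \<inter> F = {}" using G(3) Fy by fastforce
  ultimately show ?thesis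
    using R1 X y by (intro zero_free_near_unit_polydisc_insert_edges[OF t _ F _ G]) auto
qed

lemma finite_graph_finite_edges:
  assumes "finite_graph V E"
  shows "finite E"
proof -
  have "E \<subseteq> Pow V" using assms unfolding finite_graph_def by blast
  thus ?thesis using assms finite_subset unfolding finite_graph_def by blast
qed

lemma rtrancl_crossing:
  assumes "(a, b) \<in> r\<^sup>*" "a \<in> X" "b \<notin> X"
  obtains p q where "(p, q) \<in> r" "p \<in> X" "q \<notin> X"
  using assms by (induction rule: rtrancl_induct) auto

lemma card_2_other_element:
  assumes "card e = 2" "q \<in> e"
  obtains u where "e = {q, u}" "u \<noteq> q"
  using assms by (auto simp: card_2_iff doubleton_eq_iff)

text \<open>Connectedness provides a free vertex with at least one edge into \<open>U \<union> A\<close>.\<close>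
lemma zero_free_near_unit_polydisc_grow:
  assumes fg: "finite_graph V E" and con: "graph_connected V E" and U: "U \<noteq> {}" "U \<subseteq> V"
    and t: "0 < t" "t < 1" and A: "A \<subset> V - U"
    and zf: "zero_free_near_unit_polydisc t A {e\<in>E. e \<subseteq> U \<union> A}"
  obtains q where "q \<in> V - U - A" "zero_free_near_unit_polydisc t (insert q A) {e\<in>E. e \<subseteq> U \<union> insert q A}"
proof -
  have finV: "finite V" and Esub: "\<And>e. e \<in> E \<Longrightarrow> e \<subseteq> V \<and> card e = 2"
    using fg unfolding finite_graph_def by auto
  have finE: "finite E" using fg by (rule finite_graph_finite_edges)
  obtain u y where "u \<in> U" "y \<in> V - U - A" using U A by blast
  hence "(u, y) \<in> {(x, y). {x, y} \<in> E}\<^sup>*" "u \<in> U \<union> A" "y \<notin> U \<union> A"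
    using con U(2) unfolding graph_connected_def by auto
  then obtain p q where pq: "{p, q} \<in> E" "p \<in> U \<union> A" "q \<notin> U \<union> A"
    by (rule rtrancl_crossing) auto
  hence q: "q \<in> V - U - A" using Esub by blast
  define G where "G = {e\<in>E. q \<in> e \<and> e \<subseteq> U \<union> insert q A}"
  have "{e\<in>E. e \<subseteq> U \<union> insert q A} = {e\<in>E. e \<subseteq> U \<union> A} \<union> G"
    unfolding G_def using q by auto
  moreover have "zero_free_near_unit_polydisc t (insert q A) ({e\<in>E. e \<subseteq> U \<union> A} \<union> G)"
  proof (rule zero_free_near_unit_polydisc_insert_vertex[OF t _ _ _ _ zf])
    show "finite A" using A finV by (meson finite_Diff finite_subset psubset_imp_subset)
    show "finite G" "finite {e\<in>E. e \<subseteq> U \<union> A}" using finE by (simp_all add: G_def)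
    show "q \<notin> A" "\<forall>e\<in>{e\<in>E. e \<subseteq> U \<union> A}. q \<notin> e" using q by auto
    show "G \<noteq> {}" using pq unfolding G_def by blast
    show "\<forall>e\<in>G. \<exists>u. e = {q, u} \<and> u \<noteq> q"
      unfolding G_def using Esub by (metis (mono_tags, lifting) card_2_other_element mem_Collect_eq)
  qed
  ultimately show ?thesis using q by (intro that) auto
qed

lemma zero_free_near_unit_polydisc_graph:
  assumes fg: "finite_graph V E" and con: "graph_connected V E" and U: "U \<noteq> {}" "U \<subseteq> V"
    and t: "0 < t" "t < 1"
  shows "zero_free_near_unit_polydisc t (V - U) E"
proof -
  let ?W = "V - U" and ?F = "\<lambda>A. {e\<in>E. e \<subseteq> U \<union> A}"
  have finW: "finite ?W" using fg by (simp add: finite_graph_def)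
  have "\<exists>A\<subseteq>?W. card A = n \<and> zero_free_near_unit_polydisc t A (?F A)" if "n \<le> card ?W" for n
    using that
  proof (induction n)
    case 0
    have "zero_free_near_unit_polydisc t {} (?F {})"
      by (simp add: zero_free_near_unit_polydisc_def zero_free_on_def cut_poly_empty)
    thus ?case by auto
  next
    case (Suc n)
    then obtain A where A: "A \<subseteq> ?W" "card A = n" "zero_free_near_unit_polydisc t A (?F A)" by auto
    hence "A \<subset> ?W" using Suc.prems by auto
    then obtain q where q: "q \<in> ?W - A"
      and "zero_free_near_unit_polydisc t (insert q A) (?F (insert q A))"
      using zero_free_near_unit_polydisc_grow[OF fg con U t _ A(3)] by blast
    moreover have "card (insert q A) = Suc n"
      using q A finW by (meson DiffD2 card_insert_disjoint finite_subset)
    ultimately show ?case using A(1) q by (intro exI[of _ "insert q A"]) auto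
  qed
  then obtain A where "A \<subseteq> ?W" "card A = card ?W" "zero_free_near_unit_polydisc t A (?F A)" by blast
  moreover have "A = ?W" using card_subset_eq[OF finW] calculation by blast
  moreover have "?F ?W = E" using fg U(2) by (auto simp: finite_graph_def)
  ultimately show ?thesis by simp
qed

section \<open>The conditional partition function\<close>

text \<open>Spins \<open>-1\<close> exactly on \<open>S\<close>; like the elements of \<open>configs V\<close> it is \<open>undefined\<close> off \<open>V\<close>.\<close>
definition spin_config :: "'a set \<Rightarrow> 'a set \<Rightarrow> 'a \<Rightarrow> int" where
  "spin_config V S v = (if v \<in> V then if v \<in> S then -1 else 1 else undefined)"

definition vertex_degree :: "'a set set \<Rightarrow> 'a \<Rightarrow> nat" where
  "vertex_degree E v = card {e\<in>E. v \<in> e}"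

lemma power_int_sum:
  fixes z :: "'a::field"
  assumes "z \<noteq> 0" "finite A"
  shows "z powi (\<Sum>e\<in>A. f e) = (\<Prod>e\<in>A. z powi f e)"
  using assms(2) by (induction A rule: finite_induct) (simp_all add: power_int_add assms(1))

lemma bij_betw_spin_config:
  assumes "U \<subseteq> V"
  shows "bij_betw (spin_config V) (Pow (V - U)) {\<sigma>\<in>configs V. \<forall>u\<in>U. \<sigma> u = 1}"
proof (rule bij_betw_byWitness[where f' = "\<lambda>\<sigma>. {v\<in>V. \<sigma> v = -1}"])
  show "\<forall>S\<in>Pow (V - U). {v\<in>V. spin_config V S v = -1} = S" by (auto simp: spin_config_def)
  show "\<forall>\<sigma>\<in>{\<sigma>\<in>configs V. \<forall>u\<in>U. \<sigma> u = 1}. spin_config V {v\<in>V. \<sigma> v = -1} = \<sigma>"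
    by (auto simp: configs_def spin_config_def PiE_def extensional_def Pi_def intro!: ext)
  show "spin_config V ` Pow (V - U) \<subseteq> {\<sigma>\<in>configs V. \<forall>u\<in>U. \<sigma> u = 1}"
    using assms by (auto simp: configs_def spin_config_def PiE_def extensional_def)
  show "(\<lambda>\<sigma>. {v\<in>V. \<sigma> v = -1}) ` {\<sigma>\<in>configs V. \<forall>u\<in>U. \<sigma> u = 1} \<subseteq> Pow (V - U)"
    by auto
qed

lemma spin_config_edge:
  assumes "e \<subseteq> V" "card e = 2"
  shows "(\<Prod>v\<in>e. spin_config V S v) = (-1) ^ card (e \<inter> S)"
    and "(\<Sum>v\<in>e. spin_config V S v) div 2 = 1 - int (card (e \<inter> S))"
proof -
  have fin: "finite e" using assms(2) by (intro card_ge_0_finite) simp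
  have spin: "spin_config V S v = (if v \<in> S then -1 else 1)" if "v \<in> e" for v
    using that assms(1) by (auto simp: spin_config_def)
  show "(\<Prod>v\<in>e. spin_config V S v) = (-1) ^ card (e \<inter> S)"
    using fin by (simp add: spin prod.If_cases Int_def)
  have "card (e - S) = 2 - card (e \<inter> S)" using card_Int_Diff[OF fin, of S] assms(2) by simp
  moreover have "card (e \<inter> S) \<le> 2" using fin assms(2) by (metis card_mono inf_le1)
  ultimately have "(\<Sum>v\<in>e. spin_config V S v) = 2 - 2 * int (card (e \<inter> S))"
    using fin by (simp add: spin sum.If_cases Int_def Diff_eq of_nat_diff)
  thus "(\<Sum>v\<in>e. spin_config V S v) div 2 = 1 - int (card (e \<inter> S))" by simp
qed

lemma ising_edge_weight:
  fixes z :: complex and t :: real and k :: nat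
  assumes t: "0 < t" and z: "z \<noteq> 0" and k: "k \<le> 2"
  shows "complex_of_real (t powr (- real_of_int ((-1) ^ k) / 2)) * z powi (- (1 - int k))
       = (complex_of_real (t powr (-1/2)) / z) * (if k = 1 then complex_of_real t else 1) * z ^ k"
proof -
  have "t powr (1/2) = t powr (-1/2) * t" using powr_add[of t "-1/2" 1] t by simp
  moreover have "k = 0 \<or> k = 1 \<or> k = 2" using k by auto
  ultimately show ?thesis using z by (auto simp: power2_eq_square inverse_eq_divide)
qed

lemma ising_W_spin_config:
  assumes fg: "finite_graph V E" and t: "0 < t" and z: "z \<noteq> 0" and S: "S \<subseteq> V"
  shows "ising_W E t z (spin_config V S) = (complex_of_real (t powr (-1/2)) / z) ^ card E *
           ((\<Prod>e\<in>E. cut_weight t e S) * (\<Prod>v\<in>S. z ^ vertex_degree E v))"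
proof -
  have finV: "finite V" and Esub: "\<And>e. e \<in> E \<Longrightarrow> e \<subseteq> V \<and> card e = 2"
    using fg unfolding finite_graph_def by auto
  have finE: "finite E" using fg by (rule finite_graph_finite_edges)
  define k where "k e = card (e \<inter> S)" for e
  have k2: "k e \<le> 2" if "e \<in> E" for e
  proof -
    have "finite e" "card e = 2" using Esub[OF that] by (auto intro: card_ge_0_finite)
    thus ?thesis unfolding k_def by (metis card_mono inf_le1)
  qed
  let ?c = "complex_of_real (t powr (-1/2)) / z"
  have "ising_I E (spin_config V S) = (\<Sum>e\<in>E. (-1) ^ k e)"
    unfolding ising_I_def k_def using spin_config_edge(1) Esub by (intro sum.cong) auto
  hence I: "- real_of_int (ising_I E (spin_config V S)) / 2 = (\<Sum>e\<in>E. - real_of_int ((-1) ^ k e) / 2)"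
    by (simp add: sum_negf sum_divide_distrib)
  have "ising_M E (spin_config V S) = (\<Sum>e\<in>E. 1 - int (k e))"
    unfolding ising_M_def k_def using spin_config_edge(2) Esub by (intro sum.cong) auto
  hence M: "- ising_M E (spin_config V S) = (\<Sum>e\<in>E. - (1 - int (k e)))"
    by (simp only: sum_negf)
  have "ising_W E t z (spin_config V S)
      = (\<Prod>e\<in>E. complex_of_real (t powr (- real_of_int ((-1) ^ k e) / 2)) * z powi (- (1 - int (k e))))"
    unfolding ising_W_def I M using t z finE by (simp add: powr_sum power_int_sum prod.distrib)
  also have "\<dots> = (\<Prod>e\<in>E. ?c * cut_weight t e S * z ^ k e)"
    using ising_edge_weight[OF t z k2] by (simp add: cut_weight_def k_def)
  also have "\<dots> = ?c ^ card E * ((\<Prod>e\<in>E. cut_weight t e S) * (\<Prod>e\<in>E. z ^ k e))"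
    by (simp only: prod.distrib prod_constant mult.assoc)
  also have "(\<Prod>e\<in>E. z ^ k e) = (\<Prod>v\<in>S. z ^ vertex_degree E v)"
  proof -
    have "(\<Prod>e\<in>E. z ^ k e) = (\<Prod>e\<in>E. \<Prod>v\<in>{v. v \<in> S \<and> v \<in> e}. z)"
      by (rule prod.cong) (auto simp: k_def Int_def conj_commute)
    also have "\<dots> = (\<Prod>v\<in>S. \<Prod>e\<in>{e. e \<in> E \<and> v \<in> e}. z)"
      using finE finV S by (intro prod.swap_restrict) (auto intro: finite_subset)
    finally show ?thesis by (simp add: vertex_degree_def)
  qed
  finally show ?thesis .
qed

lemma cond_Z_eq_cut_poly:
  assumes fg: "finite_graph V E" and UV: "U \<subseteq> V" and t: "0 < t" and z: "z \<noteq> 0"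
  shows "cond_Z V E U (\<lambda>_. 1) z t = (complex_of_real (t powr (-1/2)) / z) ^ card E *
           cut_poly t (V - U) E (\<lambda>v. z ^ vertex_degree E v)"
proof -
  have "cond_Z V E U (\<lambda>_. 1) z t = (\<Sum>S\<in>Pow (V - U). ising_W E t z (spin_config V S))"
    unfolding cond_Z_def by (rule sum.reindex_bij_betw[OF bij_betw_spin_config[OF UV], symmetric])
  also have "\<dots> = (\<Sum>S\<in>Pow (V - U). (complex_of_real (t powr (-1/2)) / z) ^ card E *
           ((\<Prod>e\<in>E. cut_weight t e S) * (\<Prod>v\<in>S. z ^ vertex_degree E v)))"
    using ising_W_spin_config[OF fg t z] by (intro sum.cong) auto
  finally show ?thesis by (simp add: cut_poly_def sum_distrib_left)
qed

theorem mainTheorem4: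
  fixes V U :: "'a set" and E :: "'a set set" and t :: real and z :: complex
  assumes "finite_graph V E"
    and "graph_connected V E"
    and "U \<noteq> {}" and "U \<subset> V"
    and "0 < t" and "t < 1"
    and "z \<noteq> 0"
    and "cond_Z V E U (\<lambda>_. 1) z t = 0"
  shows "1 < cmod z"
proof (rule ccontr)
  assume "\<not> 1 < cmod z"
  hence z1: "cmod z \<le> 1" by simp
  have UV: "U \<subseteq> V" using assms(4) by auto
  obtain R where R1: "\<forall>w\<in>V - U. 1 < R w" and R: "zero_free_on R t (V - U) E"
    using zero_free_near_unit_polydisc_graph[OF assms(1-3) UV assms(5,6)]
    unfolding zero_free_near_unit_polydisc_def by blast
  have "cmod (z ^ vertex_degree E w) \<le> 1" for w
    using z1 by (simp add: norm_power power_le_one)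
  hence "\<forall>w\<in>V - U. cmod (z ^ vertex_degree E w) < R w" using R1 by (meson le_less_trans)
  hence "cut_poly t (V - U) E (\<lambda>v. z ^ vertex_degree E v) \<noteq> 0"
    using R[unfolded zero_free_on_def, rule_format] by simp
  moreover have "complex_of_real (t powr (-1/2)) / z \<noteq> 0" using assms(5,7) by simp
  ultimately show False
    using assms(8) by (simp add: cond_Z_eq_cut_poly[OF assms(1) UV assms(5,7)])
qed

end
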